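(* Let $n\ge 1$ be an integer and suppose that $A\subseteq\mathbb{Z}_5^n$ is sum-free. If $|A|>\frac32\cdot5^{n-1}$, then for every maximal proper subgroup $H$ of $\mathbb{Z}_5^n$, the number of $H$-cosets having non-empty intersection with $A$ is not exactly three.
   Context: $\mathbb{Z}_5^n$ denotes the elementary abelian $5$-group of rank $n$. A subset $S$ of an abelian group is sum-free if there are no $x,y,z\in S$ (not necessarily distinct) with $x+y=z$. *)

theory Defs
  imports "HOL-Analysis.Analysis" "HOL-Library.Numeral_Type"
begin

text \<open>Z_5^n is modelled as the type 5 ^ 'n (vectors over Z/5Z indexed by a finite type
 with CARD('n) = n elements), with its additive group structure.\<close>

definition sum_free :: "'a::ab_group_add set \<Rightarrow> bool" where
  "sum_free S \<longleftrightarrow> (\<forall>x\<in>S. \<forall>y\<in>S. \<forall>z\<in>S. x + y \<noteq> z)"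

definition add_subgroup :: "'a::ab_group_add set \<Rightarrow> bool" where
  "add_subgroup H \<longleftrightarrow> 0 \<in> H \<and> (\<forall>x\<in>H. \<forall>y\<in>H. x + y \<in> H) \<and> (\<forall>x\<in>H. - x \<in> H)"

definition maximal_proper_subgroup :: "'a::ab_group_add set \<Rightarrow> bool" where
  "maximal_proper_subgroup H \<longleftrightarrow> add_subgroup H \<and> H \<noteq> UNIV \<and>
     (\<forall>K. add_subgroup K \<and> H \<subseteq> K \<longrightarrow> K = H \<or> K = UNIV)"

definition add_cosets :: "'a::ab_group_add set \<Rightarrow> 'a set set" where
  "add_cosets H = (\<lambda>x. (\<lambda>h. x + h) ` H) ` UNIV"

end

theory Submission
  imports Defs
begin

text \<open>Let \<open>\<phi>\<close> be a quotient map of \<open>\<int>\<^sub>5\<^sup>n\<close> onto \<open>\<int>\<^sub>5\<close> with kernel \<open>H\<close>, let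
  \<open>m = |H| = 5\<^sup>n\<^sup>-\<^sup>1\<close> be the common size of its fibres, and let \<open>a\<^sub>t\<close> count the elements of \<open>A\<close>
  over \<open>t\<close>. Sum-freeness gives \<open>a\<^sub>i + a\<^sub>j \<le> m\<close> whenever \<open>A\<close> meets the fibre over \<open>i + j\<close>
  (for \<open>c\<close> in it, the fibre over \<open>i\<close> contains the disjoint sets \<open>A\<^sub>i\<close> and \<open>c - A\<^sub>j\<close>), and
  \<open>a\<^sub>i + a\<^sub>i\<^sub>+\<^sub>j \<le> m\<close> whenever \<open>A\<close> meets the fibre over \<open>j\<close> (translate \<open>A\<^sub>i\<close> by an element of it).
  A three-element subset of \<open>\<int>\<^sub>5\<close> either contains \<open>0\<close> or has the form \<open>{x, y, x + y}\<close>;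
  in both cases these inequalities add up to \<open>2|A| \<le> 3m\<close>, contradicting \<open>|A| > 3m/2\<close>.\<close>

lemma Z5_cases: "(x::5) = 0 \<or> x = 1 \<or> x = 2 \<or> x = 3 \<or> x = 4"
proof (induct x rule: bit1_induct)
  case (of_int z)
  then have "z = 0 \<or> z = 1 \<or> z = 2 \<or> z = 3 \<or> z = 4" by auto
  then show ?case by auto
qed

lemma Z5_inverse: "(t::5) \<noteq> 0 \<Longrightarrow> \<exists>u. u * t = 1"
  using Z5_cases[of t] by (auto intro: exI[of _ 1] exI[of _ 2] exI[of _ 3] exI[of _ 4])

lemma Z5_of_nat_surj: "\<exists>k. (t::5) = of_nat k"
  using Z5_cases[of t] by (auto intro: exI[of _ 0] exI[of _ 1] exI[of _ 2] exI[of _ 3] exI[of _ 4])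

lemma Z5_three_subset_cases:
  fixes T :: "5 set"
  assumes "card T = 3"
  obtains (zero) y z where "T = {0, y, z}" "y \<noteq> 0" "z \<noteq> 0" "y \<noteq> z"
    | (sum) x y where "T = {x, y, x + y}" "x \<noteq> 0" "y \<noteq> 0" "x \<noteq> y"
proof -
  obtain x y z where T: "T = {x, y, z}" and distinct: "x \<noteq> y" "x \<noteq> z" "y \<noteq> z"
    using assms card_3_iff by metis
  show thesis
  proof (cases "0 \<in> T")
    case True
    then show thesis
      using zero T distinct by (auto simp: insert_commute)
  next
    case False
    then have "x + y = z \<or> x + z = y \<or> y + z = x"
      using T distinct Z5_cases[of x] Z5_cases[of y] Z5_cases[of z] by auto
    then show thesis
      using sum T distinct False by (auto simp: insert_commute)
  qed
qed

lemma Z5_three_subset_weight_bound: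
  fixes a :: "5 \<Rightarrow> nat"
  assumes "card T = 3"
    and sum_le: "\<And>i j. i + j \<in> T \<Longrightarrow> a i + a j \<le> m"
    and shift_le: "\<And>i j. j \<in> T \<Longrightarrow> a i + a (i + j) \<le> m"
  shows "2 * sum a T \<le> 3 * m"
  using assms(1)
proof (cases rule: Z5_three_subset_cases)
  case (zero y z)
  have "a 0 + a y \<le> m" using sum_le[of 0 y] zero by simp
  moreover have "a z + a z \<le> m" using shift_le[where i = z and j = 0] zero by simp
  ultimately show ?thesis using zero by simp
next
  case (sum x y)
  have "a x + a y \<le> m" using sum_le[of x y] sum by simp
  moreover have "a x + a (x + y) \<le> m" using shift_le[where i = x and j = y] sum by simp
  moreover have "a y + a (x + y) \<le> m"
    using shift_le[where i = y and j = x] sum by (simp add: add.commute)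
  ultimately show ?thesis using sum by simp
qed

lemma card_disjoint_subsets_le:
  assumes "finite C" "X \<subseteq> C" "Y \<subseteq> C" "X \<inter> Y = {}"
  shows "card X + card Y \<le> card C"
  using assms by (metis card_Un_disjoint card_mono finite_subset Un_subset_iff)

lemma card_eq_sum_card_fibres:
  assumes "finite A"
  shows "card A = (\<Sum>t\<in>f ` A. card {x \<in> A. f x = t})"
  using sum.image_gen[OF assms, of "\<lambda>_. 1::nat" f] by simp

lemma sum_free_card_fibres_le:
  fixes \<phi> :: "'a::{ab_group_add, finite} \<Rightarrow> 'b::ab_group_add"
  assumes "sum_free A" "Modules.additive \<phi>" "c \<in> A" "\<phi> c = i + j"
  shows "card {x \<in> A. \<phi> x = i} + card {x \<in> A. \<phi> x = j} \<le> card {x. \<phi> x = i}"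
proof -
  let ?R = "(\<lambda>y. c - y) ` {y \<in> A. \<phi> y = j}"
  have "card ?R = card {y \<in> A. \<phi> y = j}"
    by (rule card_image) (rule inj_onI, simp)
  moreover have "?R \<subseteq> {x. \<phi> x = i}"
    using assms(2,4) by (auto simp: additive.diff)
  moreover have "{x \<in> A. \<phi> x = i} \<inter> ?R = {}"
  proof -
    have "c - y \<notin> A" if "y \<in> A" for y
      using assms(1,3) that unfolding sum_free_def by (metis diff_add_cancel)
    then show ?thesis by auto
  qed
  ultimately show ?thesis
    using card_disjoint_subsets_le[of "{x. \<phi> x = i}" "{x \<in> A. \<phi> x = i}" ?R] by auto
qed

lemma sum_free_card_fibres_shift_le:
  fixes \<phi> :: "'a::{ab_group_add, finite} \<Rightarrow> 'b::ab_group_add"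
  assumes "sum_free A" "Modules.additive \<phi>" "b \<in> A" "\<phi> b = j"
  shows "card {x \<in> A. \<phi> x = i} + card {x \<in> A. \<phi> x = i + j} \<le> card {x. \<phi> x = i + j}"
proof -
  let ?S = "(\<lambda>y. y + b) ` {y \<in> A. \<phi> y = i}"
  have "card ?S = card {y \<in> A. \<phi> y = i}"
    by (rule card_image) (rule inj_onI, simp)
  moreover have "?S \<subseteq> {x. \<phi> x = i + j}"
    using assms(2,4) by (auto simp: additive.add)
  moreover have "?S \<inter> {x \<in> A. \<phi> x = i + j} = {}"
    using assms(1,3) unfolding sum_free_def by auto
  ultimately show ?thesis
    using card_disjoint_subsets_le[of "{x. \<phi> x = i + j}" ?S "{x \<in> A. \<phi> x = i + j}"] by auto
qed

lemma sum_free_three_fibres_card_le: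
  fixes \<phi> :: "'a::{ab_group_add, finite} \<Rightarrow> 5"
  assumes "sum_free A" "Modules.additive \<phi>" "\<And>t. card {x. \<phi> x = t} = m" "card (\<phi> ` A) = 3"
  shows "2 * card A \<le> 3 * m"
proof -
  define a where "a t = card {x \<in> A. \<phi> x = t}" for t
  have sum_le: "a i + a j \<le> m" if "i + j \<in> \<phi> ` A" for i j
  proof -
    from that obtain c where "c \<in> A" "\<phi> c = i + j" by (metis imageE)
    then have "a i + a j \<le> card {x. \<phi> x = i}"
      unfolding a_def by (rule sum_free_card_fibres_le[OF assms(1,2)])
    then show ?thesis by (simp only: assms(3))
  qed
  have shift_le: "a i + a (i + j) \<le> m" if "j \<in> \<phi> ` A" for i j
  proof -
    from that obtain b where "b \<in> A" "\<phi> b = j" by blast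
    then have "a i + a (i + j) \<le> card {x. \<phi> x = i + j}"
      unfolding a_def by (rule sum_free_card_fibres_shift_le[OF assms(1,2)])
    then show ?thesis by (simp only: assms(3))
  qed
  have "card A = sum a (\<phi> ` A)"
    unfolding a_def by (rule card_eq_sum_card_fibres) simp
  then show ?thesis
    using Z5_three_subset_weight_bound[OF assms(4) sum_le shift_le] by simp
qed

lemma additive_coset_eq_fibre:
  assumes "Modules.additive \<phi>" "\<And>x. \<phi> x = 0 \<longleftrightarrow> x \<in> H"
  shows "(\<lambda>h. x + h) ` H = {y. \<phi> y = \<phi> x}"
proof (intro set_eqI iffI)
  fix y assume "y \<in> {y. \<phi> y = \<phi> x}"
  then have "\<phi> (y - x) = 0" using additive.diff[OF assms(1)] by simp
  then have "y - x \<in> H" using assms(2) by simp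
  then show "y \<in> (\<lambda>h. x + h) ` H" by (intro image_eqI[of _ _ "y - x"]) auto
qed (use assms in \<open>auto simp: additive.add\<close>)

lemma card_fibre_eq_card_kernel:
  assumes "Modules.additive \<phi>" "\<And>x. \<phi> x = 0 \<longleftrightarrow> x \<in> H" "t \<in> range \<phi>"
  shows "card {y. \<phi> y = t} = card H"
proof -
  obtain x where "\<phi> x = t" using assms(3) by blast
  then have "{y. \<phi> y = t} = (\<lambda>h. x + h) ` H"
    using additive_coset_eq_fibre[OF assms(1,2)] by simp
  then show ?thesis by (simp add: card_image)
qed

lemma card_cosets_meeting_eq_card_image:
  assumes "Modules.additive \<phi>" "\<And>x. \<phi> x = 0 \<longleftrightarrow> x \<in> H"
  shows "card {C \<in> add_cosets H. C \<inter> A \<noteq> {}} = card (\<phi> ` A)"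
proof -
  let ?F = "\<lambda>t. {y. \<phi> y = t}"
  have "add_cosets H = ?F ` range \<phi>"
    unfolding add_cosets_def additive_coset_eq_fibre[OF assms] by (simp add: image_comp)
  then have "{C \<in> add_cosets H. C \<inter> A \<noteq> {}} = ?F ` {t \<in> range \<phi>. ?F t \<inter> A \<noteq> {}}"
    by blast
  also have "{t \<in> range \<phi>. ?F t \<inter> A \<noteq> {}} = \<phi> ` A"
    by (auto intro: rev_image_eqI)
  finally have "{C \<in> add_cosets H. C \<inter> A \<noteq> {}} = ?F ` \<phi> ` A" .
  moreover have "inj_on ?F (\<phi> ` A)"
    by (rule inj_onI) auto
  ultimately show ?thesis by (simp add: card_image)
qed

lemma card_UNIV_eq_card_kernel:
  fixes \<phi> :: "'a::{ab_group_add, finite} \<Rightarrow> 'b::{ab_group_add, finite}"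
  assumes "Modules.additive \<phi>" "\<And>x. \<phi> x = 0 \<longleftrightarrow> x \<in> H" "surj \<phi>"
  shows "CARD('a) = CARD('b) * card H"
proof -
  have "CARD('a) = (\<Sum>t\<in>UNIV. card {y. \<phi> y = t})"
    using card_eq_sum_card_fibres[of "UNIV :: 'a set" \<phi>] assms(3) by simp
  also have "\<dots> = (\<Sum>t\<in>(UNIV :: 'b set). card H)"
    using card_fibre_eq_card_kernel[OF assms(1,2)] assms(3) by simp
  finally show ?thesis by simp
qed

lemma add_subgroup_diff:
  assumes "add_subgroup H" "x \<in> H" "y \<in> H"
  shows "x - y \<in> H"
  using assms unfolding add_subgroup_def by (metis diff_conv_add_uminus)

lemma add_subgroup_of_nat_smult:
  fixes h :: "'a::comm_ring_1 ^ 'n"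
  assumes "add_subgroup H" "h \<in> H"
  shows "of_nat k *s h \<in> H"
proof (induct k)
  case 0
  then show ?case using assms by (simp add: add_subgroup_def)
next
  case (Suc k)
  then show ?case using assms by (simp add: add_subgroup_def vector_sadd_rdistrib)
qed

lemma add_subgroup_Z5_smult_iff:
  fixes g :: "5 ^ 'n"
  assumes "add_subgroup H" "g \<notin> H"
  shows "t *s g \<in> H \<longleftrightarrow> t = 0"
proof
  assume "t *s g \<in> H"
  show "t = 0"
  proof (rule ccontr)
    assume "t \<noteq> 0"
    then obtain u where "u * t = 1" using Z5_inverse by blast
    moreover obtain k where "u = of_nat k" using Z5_of_nat_surj by blast
    ultimately have "g \<in> H"
      using add_subgroup_of_nat_smult[OF assms(1) \<open>t *s g \<in> H\<close>, of k] by simp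
    then show False using assms(2) by simp
  qed
qed (use assms in \<open>simp add: add_subgroup_def\<close>)

lemma add_subgroup_add_line:
  fixes g :: "'a::comm_ring_1 ^ 'n"
  assumes "add_subgroup H"
  shows "add_subgroup {h + t *s g | h t. h \<in> H}"
  unfolding add_subgroup_def
proof (intro conjI ballI)
  show "0 \<in> {h + t *s g | h t. h \<in> H}"
    using assms by (auto simp: add_subgroup_def intro!: exI[of _ 0])
next
  fix x y assume "x \<in> {h + t *s g | h t. h \<in> H}" "y \<in> {h + t *s g | h t. h \<in> H}"
  then obtain h1 t1 h2 t2 where "x = h1 + t1 *s g" "y = h2 + t2 *s g" "h1 \<in> H" "h2 \<in> H"
    by blast
  then have "x + y = (h1 + h2) + (t1 + t2) *s g" "h1 + h2 \<in> H"
    using assms by (auto simp: vector_sadd_rdistrib add_subgroup_def algebra_simps)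
  then show "x + y \<in> {h + t *s g | h t. h \<in> H}" by blast
next
  fix x assume "x \<in> {h + t *s g | h t. h \<in> H}"
  then obtain h t where "x = h + t *s g" "h \<in> H" by blast
  then have "- x = (- h) + (- t) *s g" "- h \<in> H"
    using assms by (auto simp: add_subgroup_def vec_eq_iff)
  then show "- x \<in> {h + t *s g | h t. h \<in> H}" by blast
qed

lemma maximal_proper_subgroup_line_complement:
  fixes g :: "'a::comm_ring_1 ^ 'n"
  assumes "maximal_proper_subgroup H" "g \<notin> H"
  shows "\<exists>t. x - t *s g \<in> H"
proof -
  let ?K = "{h + t *s g | h t. h \<in> H}"
  have H: "add_subgroup H" using assms(1) by (simp add: maximal_proper_subgroup_def)
  have "H \<subseteq> ?K"
  proof
    fix h assume "h \<in> H"
    moreover have "h = h + 0 *s g" by simp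
    ultimately show "h \<in> ?K" by blast
  qed
  moreover have "g \<in> ?K"
  proof -
    have "g = 0 + 1 *s g" by simp
    then show ?thesis using H unfolding add_subgroup_def by blast
  qed
  ultimately have "?K = UNIV"
    using assms add_subgroup_add_line[OF H] unfolding maximal_proper_subgroup_def by blast
  then obtain h t where "x = h + t *s g" "h \<in> H" by blast
  then show ?thesis by (intro exI[of _ t]) simp
qed

lemma maximal_proper_subgroup_quotient_map:
  fixes H :: "(5 ^ 'n) set"
  assumes "maximal_proper_subgroup H"
  obtains \<phi> :: "5 ^ 'n \<Rightarrow> 5" where "Modules.additive \<phi>" "surj \<phi>" "\<And>x. \<phi> x = 0 \<longleftrightarrow> x \<in> H"
proof -
  have H: "add_subgroup H" using assms by (simp add: maximal_proper_subgroup_def)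
  obtain g where g: "g \<notin> H" using assms by (auto simp: maximal_proper_subgroup_def)
  define \<phi> where "\<phi> x = (THE t. x - t *s g \<in> H)" for x
  have \<phi>_iff: "\<phi> x = t \<longleftrightarrow> x - t *s g \<in> H" for x t
  proof -
    have "\<exists>!t. x - t *s g \<in> H"
    proof (rule ex_ex1I)
      show "\<exists>t. x - t *s g \<in> H" by (rule maximal_proper_subgroup_line_complement[OF assms g])
    next
      fix s t assume "x - s *s g \<in> H" "x - t *s g \<in> H"
      then have "(x - s *s g) - (x - t *s g) \<in> H" by (rule add_subgroup_diff[OF H])
      moreover have "(x - s *s g) - (x - t *s g) = (t - s) *s g"
        by (simp add: vec_eq_iff algebra_simps)
      ultimately have "t - s = 0"
        using add_subgroup_Z5_smult_iff[OF H g] by (simp only:)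
      then show "s = t" by simp
    qed
    note unique = this
    show ?thesis
    proof
      assume "\<phi> x = t"
      then show "x - t *s g \<in> H" using theI'[OF unique] unfolding \<phi>_def by simp
    next
      assume "x - t *s g \<in> H"
      then show "\<phi> x = t" unfolding \<phi>_def by (rule the1_equality[OF unique])
    qed
  qed
  have \<phi>_mem: "x - \<phi> x *s g \<in> H" for x
    using \<phi>_iff[of x "\<phi> x"] by simp
  have "Modules.additive \<phi>"
  proof
    fix x y
    have "(x - \<phi> x *s g) + (y - \<phi> y *s g) \<in> H"
      using H \<phi>_mem unfolding add_subgroup_def by blast
    moreover have "(x - \<phi> x *s g) + (y - \<phi> y *s g) = (x + y) - (\<phi> x + \<phi> y) *s g"
      by (simp add: vec_eq_iff algebra_simps)
    ultimately show "\<phi> (x + y) = \<phi> x + \<phi> y" using \<phi>_iff by simp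
  qed
  moreover have "surj \<phi>"
  proof (rule surjI)
    show "\<phi> (t *s g) = t" for t
      using H \<phi>_iff by (simp add: add_subgroup_def)
  qed
  moreover have "\<phi> x = 0 \<longleftrightarrow> x \<in> H" for x
    using \<phi>_iff[of x 0] by simp
  ultimately show thesis by (rule that)
qed

theorem proposition1:
  fixes A :: "(5 ^ 'n) set"
  assumes "sum_free A"
    and "real (card A) > 3 / 2 * 5 ^ (CARD('n) - 1)"
    and "maximal_proper_subgroup H"
  shows "card {C \<in> add_cosets H. C \<inter> A \<noteq> {}} \<noteq> 3"
proof
  assume "card {C \<in> add_cosets H. C \<inter> A \<noteq> {}} = 3"
  obtain \<phi> :: "5 ^ 'n \<Rightarrow> 5" where \<phi>: "Modules.additive \<phi>" "surj \<phi>"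
    and ker: "\<And>x. \<phi> x = 0 \<longleftrightarrow> x \<in> H"
    using maximal_proper_subgroup_quotient_map[OF assms(3)] by blast
  have three: "card (\<phi> ` A) = 3"
    using \<open>card _ = 3\<close> card_cosets_meeting_eq_card_image[OF \<phi>(1) ker] by simp
  have fibre: "card {x. \<phi> x = t} = card H" for t
    using card_fibre_eq_card_kernel[OF \<phi>(1) ker] \<phi>(2) by simp
  have "5 * 5 ^ (CARD('n) - 1) = 5 * card H"
    using card_UNIV_eq_card_kernel[OF \<phi>(1) ker \<phi>(2)] power_minus_mult[of "CARD('n)" "5::nat"]
    by simp
  then have "card H = 5 ^ (CARD('n) - 1)" by simp
  then have "real (2 * card A) \<le> real (3 * 5 ^ (CARD('n) - 1))"
    using sum_free_three_fibres_card_le[OF assms(1) \<phi>(1) fibre three] of_nat_le_iff by metis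
  then show False
    using assms(2) by simp
qed

end
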